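(* Let $0\le j<n$ and let $(\mu^k)_{k\ge0}$ be the $\lambda^{j^*}$-building functions. For every transition $\mathbf e=(c,w,c')\in\mathcal E_j$ and every $i\in[n]$, $\mu^{|V|}_i(\mathbf e)\le|V|\cdot\kappa$, where $\kappa=\max_{e\in E}\ell_e(n)$.
   Context: Dynamic NCG $(\mathcal A,n)$: arena $\mathcal A=(V,E,\mathsf{src},\mathsf{tgt})$, $V$ finite, $E$ a partial function from $V\times V$ to non-decreasing piecewise-affine functions $\mathbb N\to\mathbb N$ (edge $e$ has cost $\ell_e$); $\mathsf{tgt}$ has only a self-loop of cost $0$ and is reachable from all states; players $[n]$. Configurations are maps $[n]\to V$; $c_{\mathsf{tgt}}$ maps all to $\mathsf{tgt}$. A move vector $(e_i)_i$ from $c$ gives the transition $(c,w,c')$, $c'(i)$ the target of $e_i$, $w(i)=\ell_{e_i}(u_i)$ with $u_i=|\{l:e_l=e_i\}|$; $\mathrm{cost}_i(c,c')=w(i)$; $T$ is the set of transitions; $c\Rightarrow c'$ means $(c,w,c')\in T$. For a path $\rho=(t_k)$, $\rho_{\ge k}$ is its suffix from $t_k$ and $\mathrm{cost}_i(\rho)$ the total payment of $i$. $\mathrm{dev}_i(c,c')=\{c''\mid c\Rightarrow c'',\ c''(l)=c'(l)\ \forall l\ne i\}$. $X_m$: configurations with exactly $m$ players at $\mathsf{tgt}$; $X_{\ge m}=\bigcup_{m'\ge m}X_{m'}$; $\mathcal E_m$, $\mathcal E_{\ge m}$: transitions $(c,w,c')$ with $c\in X_m$, resp. $c\in X_{\ge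 m}$. For $\lambda=(\lambda_i)$, $\lambda_i:\mathcal E_{\ge m}\to\mathbb N\cup\{\pm\infty\}$, and $c\in X_{\ge m}$, $\Lambda_\lambda(c)$ is the set of paths $\rho=(t_k)$ from $c$ visiting $c_{\mathsf{tgt}}$ with $\mathrm{cost}_i(\rho_{\ge k})\le\lambda_i(t_k)$ for all $i,k$. Define $\lambda^{n^*}_i(c_{\mathsf{tgt}},0^n,c_{\mathsf{tgt}})=0$; for $j<n$ the $\lambda^{j^*}$-building functions $\mu^k_i:\mathcal E_{\ge j}\to\mathbb N\cup\{\pm\infty\}$ are: $\mu^k_i=\lambda^{(j+1)^*}_i$ on $\mathcal E_{\ge j+1}$; for $\mathbf e=(c,w,c')\in\mathcal E_j$, $\mu^0_i(\mathbf e)=0$ if $c(i)=\mathsf{tgt}$ else $+\infty$; for $k>0$, $\mu^k_i(\mathbf e)=0$ if $c(i)=\mathsf{tgt}$, otherwise $\min_{c''\in\mathrm{dev}_i(c,c')}\sup_{\rho\in\Lambda_{\mu^{k-1}}(c'')}(\mathrm{cost}_i(c,c'')+\mathrm{cost}_i(\rho))$ if $\Lambda_{\mu^{k-1}}(\tilde c)\ne\emptyset$ for all $(c,\tilde w,\tilde c)\in T$, and $-\infty$ otherwise; $\lambda^{j^*}$ is the pointwise limit of $(\mu^k)_k$. *)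

theory Defs
  imports Complex_Main "HOL-Library.FuncSet" "HOL-Library.Extended_Real"
begin

text \<open>Players are 0..<n. Configurations are extensional maps from the players to V.
 A transition is a triple (c, w, c') encoded as (c, (w, c')).\<close>

type_synonym 'v config = "nat \<Rightarrow> 'v"
type_synonym 'v trans = "'v config \<times> (nat \<Rightarrow> nat) \<times> 'v config"

definition tsrc :: "'v trans \<Rightarrow> 'v config" where "tsrc t = fst t"
definition tw :: "'v trans \<Rightarrow> nat \<Rightarrow> nat" where "tw t = fst (snd t)"
definition tdst :: "'v trans \<Rightarrow> 'v config" where "tdst t = snd (snd t)"

text \<open>Piecewise affine with finitely many pieces: a finite set B of breakpoints such that
 on every interval not crossing a breakpoint any three points are collinear.\<close>
definition piecewise_affine :: "(nat \<Rightarrow> nat) \<Rightarrow> bool" where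
  "piecewise_affine f \<longleftrightarrow> (\<exists>B::nat set. finite B \<and>
     (\<forall>x y z. x < y \<and> y < z \<and> (\<forall>b\<in>B. \<not> (x < b \<and> b \<le> z)) \<longrightarrow>
        (int (f y) - int (f x)) * (int z - int y) = (int (f z) - int (f y)) * (int y - int x)))"

definition arena :: "'v set \<Rightarrow> ('v \<Rightarrow> 'v \<Rightarrow> (nat \<Rightarrow> nat) option) \<Rightarrow> 'v \<Rightarrow> 'v \<Rightarrow> bool" where
  "arena V E src tgt \<longleftrightarrow> finite V \<and> src \<in> V \<and> tgt \<in> V \<and>
     (\<forall>u v. E u v \<noteq> None \<longrightarrow> u \<in> V \<and> v \<in> V) \<and>
     (\<forall>u v f. E u v = Some f \<longrightarrow> mono f \<and> piecewise_affine f) \<and>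
     E tgt tgt = Some (\<lambda>_. 0) \<and> (\<forall>v. E tgt v \<noteq> None \<longrightarrow> v = tgt) \<and>
     (\<forall>v\<in>V. (v, tgt) \<in> {(u, v). E u v \<noteq> None}\<^sup>*)"

definition configs :: "'v set \<Rightarrow> nat \<Rightarrow> 'v config set" where
  "configs V n = {0..<n} \<rightarrow>\<^sub>E V"

definition ctgt :: "'v \<Rightarrow> nat \<Rightarrow> 'v config" where
  "ctgt tgt n = restrict (\<lambda>_. tgt) {0..<n}"

text \<open>Cost for player i of the (unique) move vector from c to c'; the edge of a player
 is determined by its source and target, and u_i counts players using the same edge.\<close>
definition step_cost :: "('v \<Rightarrow> 'v \<Rightarrow> (nat \<Rightarrow> nat) option) \<Rightarrow> nat \<Rightarrow> 'v config \<Rightarrow> 'v config \<Rightarrow> nat \<Rightarrow> nat" where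
  "step_cost E n c c' i = the (E (c i) (c' i)) (card {l\<in>{0..<n}. c l = c i \<and> c' l = c' i})"

definition transitions :: "'v set \<Rightarrow> ('v \<Rightarrow> 'v \<Rightarrow> (nat \<Rightarrow> nat) option) \<Rightarrow> nat \<Rightarrow> 'v trans set" where
  "transitions V E n = {(c, w, c'). c \<in> configs V n \<and> c' \<in> configs V n \<and>
      (\<forall>i\<in>{0..<n}. E (c i) (c' i) \<noteq> None) \<and> w = restrict (step_cost E n c c') {0..<n}}"

definition numtgt :: "'v \<Rightarrow> nat \<Rightarrow> 'v config \<Rightarrow> nat" where
  "numtgt tgt n c = card {i\<in>{0..<n}. c i = tgt}"

definition dev :: "'v set \<Rightarrow> ('v \<Rightarrow> 'v \<Rightarrow> (nat \<Rightarrow> nat) option) \<Rightarrow> nat \<Rightarrow> nat \<Rightarrow> 'v config \<Rightarrow> 'v config \<Rightarrow> 'v config set" where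
  "dev V E n i c c' = {c''. (\<exists>w. (c, w, c'') \<in> transitions V E n) \<and>
      (\<forall>l\<in>{0..<n}. l \<noteq> i \<longrightarrow> c'' l = c' l)}"

definition is_path :: "'v set \<Rightarrow> ('v \<Rightarrow> 'v \<Rightarrow> (nat \<Rightarrow> nat) option) \<Rightarrow> nat \<Rightarrow> 'v config \<Rightarrow> (nat \<Rightarrow> 'v trans) \<Rightarrow> bool" where
  "is_path V E n c \<rho> \<longleftrightarrow> tsrc (\<rho> 0) = c \<and> (\<forall>k. \<rho> k \<in> transitions V E n \<and> tdst (\<rho> k) = tsrc (\<rho> (Suc k)))"

definition path_cost :: "nat \<Rightarrow> (nat \<Rightarrow> 'v trans) \<Rightarrow> nat \<Rightarrow> ereal" where
  "path_cost i \<rho> k = (SUP N. ereal (real (\<Sum>m\<in>{k..<N}. tw (\<rho> m) i)))"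

definition Lambda :: "'v set \<Rightarrow> ('v \<Rightarrow> 'v \<Rightarrow> (nat \<Rightarrow> nat) option) \<Rightarrow> 'v \<Rightarrow> nat \<Rightarrow>
     (nat \<Rightarrow> 'v trans \<Rightarrow> ereal) \<Rightarrow> 'v config \<Rightarrow> (nat \<Rightarrow> 'v trans) set" where
  "Lambda V E tgt n lam c = {\<rho>. is_path V E n c \<rho> \<and> (\<exists>k. tsrc (\<rho> k) = ctgt tgt n) \<and>
      (\<forall>i\<in>{0..<n}. \<forall>k. path_cost i \<rho> k \<le> lam i (\<rho> k))}"

text \<open>The lambda^{j*}-building functions mu^k, given lamnext = lambda^{(j+1)*}.\<close>
fun mu :: "'v set \<Rightarrow> ('v \<Rightarrow> 'v \<Rightarrow> (nat \<Rightarrow> nat) option) \<Rightarrow> 'v \<Rightarrow> nat \<Rightarrow> nat \<Rightarrow>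
     (nat \<Rightarrow> 'v trans \<Rightarrow> ereal) \<Rightarrow> nat \<Rightarrow> nat \<Rightarrow> 'v trans \<Rightarrow> ereal" where
  "mu V E tgt n j lamnext 0 i e =
     (if numtgt tgt n (tsrc e) \<ge> Suc j then lamnext i e
      else if tsrc e i = tgt then 0 else \<infinity>)"
| "mu V E tgt n j lamnext (Suc k) i e =
     (if numtgt tgt n (tsrc e) \<ge> Suc j then lamnext i e
      else if tsrc e i = tgt then 0
      else if (\<forall>t\<in>transitions V E n. tsrc t = tsrc e \<longrightarrow>
                  Lambda V E tgt n (mu V E tgt n j lamnext k) (tdst t) \<noteq> {})
      then Min ((\<lambda>c''. SUP \<rho>\<in>Lambda V E tgt n (mu V E tgt n j lamnext k) c''.
                   ereal (real (step_cost E n (tsrc e) c'' i)) + path_cost i \<rho> 0)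
                ` dev V E n i (tsrc e) (tdst e))
      else -\<infinity>)"

text \<open>lambda^{(n-d)*}, by recursion on d; lambda^{n*} is 0 (on its only transition).\<close>
fun lamstar_aux :: "'v set \<Rightarrow> ('v \<Rightarrow> 'v \<Rightarrow> (nat \<Rightarrow> nat) option) \<Rightarrow> 'v \<Rightarrow> nat \<Rightarrow> nat \<Rightarrow>
     nat \<Rightarrow> 'v trans \<Rightarrow> ereal" where
  "lamstar_aux V E tgt n 0 = (\<lambda>i e. 0)"
| "lamstar_aux V E tgt n (Suc d) =
     (\<lambda>i e. lim (\<lambda>k. mu V E tgt n (n - Suc d) (lamstar_aux V E tgt n d) k i e))"

definition lamstar :: "'v set \<Rightarrow> ('v \<Rightarrow> 'v \<Rightarrow> (nat \<Rightarrow> nat) option) \<Rightarrow> 'v \<Rightarrow> nat \<Rightarrow> nat \<Rightarrow>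
     nat \<Rightarrow> 'v trans \<Rightarrow> ereal" where
  "lamstar V E tgt n j = lamstar_aux V E tgt n (n - j)"

definition kappa :: "'v set \<Rightarrow> ('v \<Rightarrow> 'v \<Rightarrow> (nat \<Rightarrow> nat) option) \<Rightarrow> nat \<Rightarrow> nat" where
  "kappa V E n = Max {the (E u v) n | u v. u \<in> V \<and> v \<in> V \<and> E u v \<noteq> None}"

end

theory Submission imports Defs begin

(*
  Let d(v) be the length of a shortest path from v to tgt; listing the distances along such a
  path shows d(v) < |V|. At a transition from c, as soon as k >= d(c i), the building function
  mu^k for player i is at most d(c i) * kappa: player i can deviate to the first edge of a
  shortest path, paying at most kappa (all edge costs at loads <= n are bounded by kappa), and
  every continuation in Lambda_(mu^(k-1)) then charges it at most (d(c i) - 1) * kappa by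
  induction on k. The same bound for lambda^{(j+1)*}, used on transitions of higher levels,
  follows by induction on the level: mu^k decreases in k, so lambda^{j*}, the limit of the
  mu^k, is their infimum and lies below mu^|V|.
*)

definition dist_to :: "('a \<times> 'a) set \<Rightarrow> 'a \<Rightarrow> 'a \<Rightarrow> nat" where
  "dist_to R t v = (LEAST d. (v, t) \<in> R ^^ d)"

lemma relpow_dist_to:
  assumes "(v, t) \<in> R\<^sup>*"
  shows "(v, t) \<in> R ^^ dist_to R t v"
  using assms unfolding dist_to_def by (meson LeastI rtrancl_power)

lemma dist_to_le: "(v, t) \<in> R ^^ d \<Longrightarrow> dist_to R t v \<le> d"
  unfolding dist_to_def by (rule Least_le)

lemma dist_to_eq_0_iff:
  assumes "(v, t) \<in> R\<^sup>*"
  shows "dist_to R t v = 0 \<longleftrightarrow> v = t"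
  using relpow_dist_to[OF assms] dist_to_le[where v = t and d = 0] by auto

lemma dist_to_Suc_step:
  assumes "(v, t) \<in> R\<^sup>*" and "v \<noteq> t"
  obtains u where "(v, u) \<in> R" and "(u, t) \<in> R\<^sup>*" and "dist_to R t v = Suc (dist_to R t u)"
proof -
  obtain m where m: "dist_to R t v = Suc m"
    using assms(2) dist_to_eq_0_iff[OF assms(1)] not0_implies_Suc by blast
  with relpow_dist_to[OF assms(1)] obtain u where vu: "(v, u) \<in> R" and ut: "(u, t) \<in> R ^^ m"
    by (metis relpow_Suc_D2)
  from ut have "(u, t) \<in> R\<^sup>*"
    by (rule relpow_imp_rtrancl)
  have "dist_to R t u \<le> m"
    using ut by (rule dist_to_le)
  moreover have "dist_to R t v \<le> Suc (dist_to R t u)"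
    using vu relpow_dist_to[OF \<open>(u, t) \<in> R\<^sup>*\<close>] by (intro dist_to_le relpow_Suc_I2)
  ultimately have "dist_to R t v = Suc (dist_to R t u)"
    using m by linarith
  with vu \<open>(u, t) \<in> R\<^sup>*\<close> show ?thesis
    by (rule that)
qed

lemma atMost_dist_to_subset_image:
  assumes "R \<subseteq> V \<times> V" and "v \<in> V" and "(v, t) \<in> R\<^sup>*"
  shows "{..dist_to R t v} \<subseteq> dist_to R t ` V"
  using assms(2,3)
proof (induction "dist_to R t v" arbitrary: v)
  case 0
  then show ?case
    by (metis atMost_0 empty_subsetI image_eqI insert_subset)
next
  case (Suc d)
  have "v \<noteq> t"
    using Suc.hyps(2) dist_to_eq_0_iff[OF Suc.prems(2)] by simp
  with Suc.prems(2) obtain u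
    where "(v, u) \<in> R" and "(u, t) \<in> R\<^sup>*" and "dist_to R t v = Suc (dist_to R t u)"
    by (rule dist_to_Suc_step)
  moreover from this(1) assms(1) have "u \<in> V"
    by blast
  ultimately have "{..d} \<subseteq> dist_to R t ` V"
    using Suc.hyps by (metis Suc_inject)
  then show ?case
    unfolding Suc.hyps(2)[symmetric] atMost_Suc using Suc.hyps(2) Suc.prems(1) by auto
qed

lemma dist_to_less_card:
  assumes "finite V" and "R \<subseteq> V \<times> V" and "v \<in> V" and "(v, t) \<in> R\<^sup>*"
  shows "dist_to R t v < card V"
proof -
  have "Suc (dist_to R t v) = card {..dist_to R t v}"
    by simp
  also have "\<dots> \<le> card (dist_to R t ` V)"
    using assms by (intro card_mono atMost_dist_to_subset_image) auto
  also have "\<dots> \<le> card V"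
    using assms(1) by (rule card_image_le)
  finally show ?thesis
    by simp
qed

definition edges :: "('v \<Rightarrow> 'v \<Rightarrow> (nat \<Rightarrow> nat) option) \<Rightarrow> ('v \<times> 'v) set" where
  "edges E = {(u, v). E u v \<noteq> None}"

lemma arena_edges_subset:
  "arena V E src tgt \<Longrightarrow> edges E \<subseteq> V \<times> V"
  unfolding arena_def edges_def by auto

lemma arena_reaches_tgt:
  "arena V E src tgt \<Longrightarrow> v \<in> V \<Longrightarrow> (v, tgt) \<in> (edges E)\<^sup>*"
  unfolding arena_def edges_def by blast

lemma arena_dist_to_tgt_less_card:
  assumes "arena V E src tgt" and "v \<in> V"
  shows "dist_to (edges E) tgt v < card V"
proof -
  have "finite V"
    using assms(1) by (simp add: arena_def)
  then show ?thesis
    using arena_edges_subset[OF assms(1)] assms(2) arena_reaches_tgt[OF assms]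
    by (rule dist_to_less_card)
qed

lemma arena_dist_to_tgt_step:
  assumes "arena V E src tgt" and "v \<in> V" and "v \<noteq> tgt"
  obtains u where "E v u \<noteq> None" and "u \<in> V"
    and "dist_to (edges E) tgt v = Suc (dist_to (edges E) tgt u)"
proof -
  obtain u where "(v, u) \<in> edges E" and "dist_to (edges E) tgt v = Suc (dist_to (edges E) tgt u)"
    using dist_to_Suc_step[OF arena_reaches_tgt[OF assms(1,2)] assms(3)] by blast
  then show ?thesis
    using that arena_edges_subset[OF assms(1)] by (auto simp: edges_def)
qed

lemma edge_cost_le_kappa:
  assumes "arena V E src tgt" and "E u v = Some f" and "m \<le> n"
  shows "f m \<le> kappa V E n"
proof -
  have "finite V" and "u \<in> V" and "v \<in> V" and "mono f"
    using assms(1,2) unfolding arena_def by blast+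
  let ?S = "{the (E u v) n | u v. u \<in> V \<and> v \<in> V \<and> E u v \<noteq> None}"
  have "?S \<subseteq> (\<lambda>(u, v). the (E u v) n) ` (V \<times> V)"
    by auto
  moreover have "finite ((\<lambda>(u, v). the (E u v) n) ` (V \<times> V))"
    using \<open>finite V\<close> by simp
  ultimately have "finite ?S"
    by (rule finite_subset)
  moreover have "f n \<in> ?S"
    using assms(2) \<open>u \<in> V\<close> \<open>v \<in> V\<close> by force
  ultimately have "f n \<le> kappa V E n"
    unfolding kappa_def by (rule Max_ge)
  moreover have "f m \<le> f n"
    using \<open>mono f\<close> assms(3) by (rule monoD)
  ultimately show ?thesis
    by simp
qed

lemma transitions_memD:
  assumes "t \<in> transitions V E n"
  shows "tsrc t \<in> configs V n" and "tdst t \<in> configs V n"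
    and "\<And>l. l < n \<Longrightarrow> E (tsrc t l) (tdst t l) \<noteq> None"
  using assms by (cases t; auto simp: transitions_def tsrc_def tdst_def)+

lemma configs_memD: "c \<in> configs V n \<Longrightarrow> i < n \<Longrightarrow> c i \<in> V"
  unfolding configs_def by auto

lemma finite_dev:
  assumes "finite V"
  shows "finite (dev V E n i c c')"
proof (rule finite_subset)
  show "dev V E n i c c' \<subseteq> configs V n"
    unfolding dev_def transitions_def by auto
  show "finite (configs V n)"
    unfolding configs_def using assms by (simp add: finite_PiE)
qed

lemma step_cost_le_kappa:
  assumes "arena V E src tgt" and "E (c i) (c' i) \<noteq> None"
  shows "step_cost E n c c' i \<le> kappa V E n"
proof -
  obtain f where f: "E (c i) (c' i) = Some f"
    using assms(2) by auto
  have "card {l \<in> {0..<n}. c l = c i \<and> c' l = c' i} \<le> card {0..<n}"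
    by (intro card_mono) auto
  then show ?thesis
    unfolding step_cost_def using edge_cost_le_kappa[OF assms(1) f] f by simp
qed

lemma update_mem_dev:
  assumes "e \<in> transitions V E n" and "i < n" and "E (tsrc e i) u \<noteq> None" and "u \<in> V"
  shows "(tdst e)(i := u) \<in> dev V E n i (tsrc e) (tdst e)"
proof -
  let ?c'' = "(tdst e)(i := u)"
  have "?c'' \<in> configs V n"
    using transitions_memD(2)[OF assms(1)] assms(2,4)
    by (auto simp: configs_def PiE_def extensional_def)
  moreover have "\<forall>l\<in>{0..<n}. E (tsrc e l) (?c'' l) \<noteq> None"
    using transitions_memD(3)[OF assms(1)] assms(3) by auto
  ultimately have "(tsrc e, restrict (step_cost E n (tsrc e) ?c'') {0..<n}, ?c'') \<in> transitions V E n"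
    using transitions_memD(1)[OF assms(1)] unfolding transitions_def by auto
  then show ?thesis
    unfolding dev_def by auto
qed

lemma Min_image_mono:
  fixes f g :: "'a \<Rightarrow> 'b::linorder"
  assumes "finite A" and "\<And>x. x \<in> A \<Longrightarrow> f x \<le> g x"
  shows "Min (f ` A) \<le> Min (g ` A)"
proof (cases "A = {}")
  case False
  with assms(1) have "Min (g ` A) \<in> g ` A"
    by (intro Min_in) auto
  then obtain x where "x \<in> A" and "Min (g ` A) = g x"
    by auto
  then show ?thesis
    using assms by (metis Min_le finite_imageI image_eqI order_trans)
qed simp

lemma Lambda_mono:
  "(\<And>i e. lam' i e \<le> lam i e) \<Longrightarrow> Lambda V E tgt n lam' c \<subseteq> Lambda V E tgt n lam c"
  unfolding Lambda_def using order_trans by blast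

lemma mu_Suc_mono:
  assumes "finite V" and "\<And>i e. mu V E tgt n j lam k' i e \<le> mu V E tgt n j lam k i e"
  shows "mu V E tgt n j lam (Suc k') i e \<le> mu V E tgt n j lam (Suc k) i e"
proof -
  let ?\<Lambda> = "\<lambda>k. Lambda V E tgt n (mu V E tgt n j lam k)"
  let ?ok = "\<lambda>k. \<forall>t\<in>transitions V E n. tsrc t = tsrc e \<longrightarrow> ?\<Lambda> k (tdst t) \<noteq> {}"
  have sub: "?\<Lambda> k' c \<subseteq> ?\<Lambda> k c" for c
    using assms(2) by (rule Lambda_mono)
  consider "Suc j \<le> numtgt tgt n (tsrc e) \<or> tsrc e i = tgt" | "\<not> ?ok k'"
    | "numtgt tgt n (tsrc e) < Suc j" and "tsrc e i \<noteq> tgt" and "?ok k'"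
    by fastforce
  then show ?thesis
  proof cases
    case 3
    with sub have "?ok k"
      by blast
    moreover have "Min ((\<lambda>c''. SUP \<rho>\<in>?\<Lambda> k' c''.
                   ereal (real (step_cost E n (tsrc e) c'' i)) + path_cost i \<rho> 0)
                  ` dev V E n i (tsrc e) (tdst e))
        \<le> Min ((\<lambda>c''. SUP \<rho>\<in>?\<Lambda> k c''.
                   ereal (real (step_cost E n (tsrc e) c'' i)) + path_cost i \<rho> 0)
                  ` dev V E n i (tsrc e) (tdst e))"
      using finite_dev[OF assms(1)] by (intro Min_image_mono SUP_subset_mono sub order_refl)
    ultimately show ?thesis
      using 3 by simp
  qed auto
qed

lemma mu_Suc_le: "finite V \<Longrightarrow> mu V E tgt n j lam (Suc k) i e \<le> mu V E tgt n j lam k i e"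
proof (induction k arbitrary: i e)
  case (Suc k)
  then show ?case
    by (intro mu_Suc_mono)
qed simp

lemma mu_Suc_le_deviation:
  assumes "finite V" and "c'' \<in> dev V E n i (tsrc e) (tdst e)"
    and "numtgt tgt n (tsrc e) < Suc j" and "tsrc e i \<noteq> tgt"
    and "\<And>\<rho>. \<rho> \<in> Lambda V E tgt n (mu V E tgt n j lam k) c'' \<Longrightarrow> path_cost i \<rho> 0 \<le> B"
  shows "mu V E tgt n j lam (Suc k) i e \<le> ereal (real (step_cost E n (tsrc e) c'' i)) + B"
proof (cases "\<forall>t\<in>transitions V E n. tsrc t = tsrc e \<longrightarrow>
                Lambda V E tgt n (mu V E tgt n j lam k) (tdst t) \<noteq> {}")
  case True
  let ?F = "\<lambda>c''. SUP \<rho>\<in>Lambda V E tgt n (mu V E tgt n j lam k) c''.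
              ereal (real (step_cost E n (tsrc e) c'' i)) + path_cost i \<rho> 0"
  have "mu V E tgt n j lam (Suc k) i e = Min (?F ` dev V E n i (tsrc e) (tdst e))"
    using assms(3,4) True by simp
  also have "\<dots> \<le> ?F c''"
    using finite_dev[OF assms(1)] assms(2) by simp
  also have "\<dots> \<le> ereal (real (step_cost E n (tsrc e) c'' i)) + B"
    using assms(5) by (intro SUP_least add_left_mono)
  finally show ?thesis .
next
  case False
  with assms(3,4) have "mu V E tgt n j lam (Suc k) i e = -\<infinity>"
    by (simp only: mu.simps not_less if_False if_not_P[OF False] not_le[symmetric])
  then show ?thesis
    by simp
qed

lemma mu_Suc_le_kappa_plus_edge_target:
  assumes ar: "arena V E src tgt" and "t \<in> transitions V E n" and "i < n"
    and "numtgt tgt n (tsrc t) < Suc j" and "tsrc t i \<noteq> tgt"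
    and edge: "E (tsrc t i) u \<noteq> None" and "u \<in> V"
    and bound: "\<And>t'. t' \<in> transitions V E n \<Longrightarrow> tsrc t' i = u \<Longrightarrow> mu V E tgt n j lam k i t' \<le> B"
  shows "mu V E tgt n j lam (Suc k) i t \<le> ereal (real (kappa V E n)) + B"
proof -
  define c'' where "c'' = (tdst t)(i := u)"
  have "finite V"
    using ar by (simp add: arena_def)
  moreover have "c'' \<in> dev V E n i (tsrc t) (tdst t)"
    unfolding c''_def using assms(2,3) edge \<open>u \<in> V\<close> by (rule update_mem_dev)
  ultimately have "mu V E tgt n j lam (Suc k) i t \<le> ereal (real (step_cost E n (tsrc t) c'' i)) + B"
  proof (rule mu_Suc_le_deviation[OF _ _ assms(4,5)])
    fix \<rho> assume "\<rho> \<in> Lambda V E tgt n (mu V E tgt n j lam k) c''"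
    then have "\<rho> 0 \<in> transitions V E n" and "tsrc (\<rho> 0) = c''"
      and "path_cost i \<rho> 0 \<le> mu V E tgt n j lam k i (\<rho> 0)"
      unfolding Lambda_def is_path_def using assms(3) by auto
    moreover have "tsrc (\<rho> 0) i = u"
      using \<open>tsrc (\<rho> 0) = c''\<close> by (simp add: c''_def)
    ultimately show "path_cost i \<rho> 0 \<le> B"
      using bound[of "\<rho> 0"] by (meson order_trans)
  qed
  also have "\<dots> \<le> ereal (real (kappa V E n)) + B"
    using step_cost_le_kappa[OF ar, of "tsrc t" i c''] edge by (simp add: c''_def add_right_mono)
  finally show ?thesis .
qed

lemma mu_le_dist_to_tgt_times_kappa:
  assumes ar: "arena V E src tgt"
    and higher: "\<And>t i. t \<in> transitions V E n \<Longrightarrow> i < n \<Longrightarrow> Suc j \<le> numtgt tgt n (tsrc t) \<Longrightarrow>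
      lam i t \<le> ereal (real (dist_to (edges E) tgt (tsrc t i) * kappa V E n))"
  shows "t \<in> transitions V E n \<Longrightarrow> i < n \<Longrightarrow> dist_to (edges E) tgt (tsrc t i) \<le> k \<Longrightarrow>
    mu V E tgt n j lam k i t \<le> ereal (real (dist_to (edges E) tgt (tsrc t i) * kappa V E n))"
proof (induction k arbitrary: t i)
  case 0
  have "tsrc t i \<in> V"
    using configs_memD[OF transitions_memD(1)[OF 0(1)] 0(2)] .
  with 0(3) have "tsrc t i = tgt"
    using dist_to_eq_0_iff[OF arena_reaches_tgt[OF ar]] by auto
  then show ?case
    using higher[OF 0(1,2)] by auto
next
  case (Suc k)
  let ?d = "dist_to (edges E) tgt" and ?K = "kappa V E n" and ?c = "tsrc t"
  have "?c i \<in> V"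
    using configs_memD[OF transitions_memD(1)[OF Suc(2)] Suc(3)] .
  consider "Suc j \<le> numtgt tgt n ?c" | "?c i = tgt" | "numtgt tgt n ?c < Suc j" and "?c i \<noteq> tgt"
    by fastforce
  then show ?case
  proof cases
    case 3
    obtain u where edge: "E (?c i) u \<noteq> None" and "u \<in> V" and dist: "?d (?c i) = Suc (?d u)"
      using arena_dist_to_tgt_step[OF ar \<open>?c i \<in> V\<close> 3(2)] .
    have "mu V E tgt n j lam (Suc k) i t \<le> ereal (real ?K) + ereal (real (?d u * ?K))"
    proof (rule mu_Suc_le_kappa_plus_edge_target[OF ar Suc(2,3) 3 edge \<open>u \<in> V\<close>])
      fix t' assume "t' \<in> transitions V E n" and "tsrc t' i = u"
      moreover have "?d u \<le> k"
        using Suc(4) dist by simp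
      ultimately show "mu V E tgt n j lam k i t' \<le> ereal (real (?d u * ?K))"
        using Suc.IH[of t' i] Suc(3) by simp
    qed
    also have "\<dots> = ereal (real (?d (?c i) * ?K))"
      using dist by simp
    finally show ?thesis .
  qed (use higher[OF Suc(2,3)] in auto)
qed

lemma lamstar_aux_le_dist_to_tgt_times_kappa:
  assumes ar: "arena V E src tgt"
  shows "m \<le> n \<Longrightarrow> t \<in> transitions V E n \<Longrightarrow> i < n \<Longrightarrow> n - m \<le> numtgt tgt n (tsrc t) \<Longrightarrow>
    lamstar_aux V E tgt n m i t \<le> ereal (real (dist_to (edges E) tgt (tsrc t i) * kappa V E n))"
proof (induction m arbitrary: t i)
  case (Suc m)
  let ?\<mu> = "\<lambda>k. mu V E tgt n (n - Suc m) (lamstar_aux V E tgt n m) k i t"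
  have "finite V"
    using ar by (simp add: arena_def)
  then have "decseq ?\<mu>"
    by (intro decseq_SucI mu_Suc_le)
  then have "lamstar_aux V E tgt n (Suc m) i t = (INF k. ?\<mu> k)"
    by (simp add: LIMSEQ_INF limI)
  also have "\<dots> \<le> ?\<mu> (card V)"
    by (rule INF_lower) simp
  also have "\<dots> \<le> ereal (real (dist_to (edges E) tgt (tsrc t i) * kappa V E n))"
  proof (rule mu_le_dist_to_tgt_times_kappa[OF ar _ Suc.prems(2,3)])
    show "\<And>t i. t \<in> transitions V E n \<Longrightarrow> i < n \<Longrightarrow> Suc (n - Suc m) \<le> numtgt tgt n (tsrc t) \<Longrightarrow>
        lamstar_aux V E tgt n m i t \<le> ereal (real (dist_to (edges E) tgt (tsrc t i) * kappa V E n))"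
      using Suc.IH Suc.prems(1) by (simp add: Suc_diff_Suc)
    show "dist_to (edges E) tgt (tsrc t i) \<le> card V"
      using arena_dist_to_tgt_less_card[OF ar configs_memD[OF transitions_memD(1)]] Suc.prems(2,3)
      by (simp add: less_imp_le)
  qed
  finally show ?case .
qed simp

text \<open>The bound holds on every transition.\<close>
theorem lemmaC7:
  fixes V :: "'v set" and E :: "'v \<Rightarrow> 'v \<Rightarrow> (nat \<Rightarrow> nat) option"
    and src tgt :: 'v and n j i :: nat and e :: "'v trans"
  assumes "arena V E src tgt"
    and "j < n"
    and "e \<in> transitions V E n" and "numtgt tgt n (tsrc e) = j"
    and "i < n"
  shows "mu V E tgt n j (lamstar V E tgt n (Suc j)) (card V) i e
           \<le> ereal (real (card V * kappa V E n))"
proof -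
  let ?d = "dist_to (edges E) tgt (tsrc e i)"
  have higher: "\<And>t i. t \<in> transitions V E n \<Longrightarrow> i < n \<Longrightarrow> Suc j \<le> numtgt tgt n (tsrc t) \<Longrightarrow>
      lamstar V E tgt n (Suc j) i t
        \<le> ereal (real (dist_to (edges E) tgt (tsrc t i) * kappa V E n))"
    unfolding lamstar_def using lamstar_aux_le_dist_to_tgt_times_kappa[OF assms(1)] assms(2)
    by simp
  have "?d \<le> card V"
    using arena_dist_to_tgt_less_card[OF assms(1) configs_memD[OF transitions_memD(1)]] assms(3,5)
    by (simp add: less_imp_le)
  have "mu V E tgt n j (lamstar V E tgt n (Suc j)) (card V) i e
      \<le> ereal (real (?d * kappa V E n))"
    by (rule mu_le_dist_to_tgt_times_kappa[OF assms(1) _ assms(3,5) \<open>?d \<le> card V\<close>]) (fact higher)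
  also have "\<dots> \<le> ereal (real (card V * kappa V E n))"
    using \<open>?d \<le> card V\<close> by (simp add: mult_right_mono)
  finally show ?thesis .
qed

end
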